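(* Let $s\in(0,1/2)$, $a:=1-2s$, let $\mathcal{N}\subset\mathbb{R}^d$ be a compact smooth submanifold without boundary, and let $v\in H^1(\partial^+B_1;\mathbb{R}^d,y^ad\mathbf{x})$ be such that $v(\pm1,0)\in\mathcal{N}$. Then for every $\mathbf{x}\in\partial^+B_1$, $$d_{\mathcal{N}}^2\big(v(\mathbf{x})\big)\le\left(\int_{\partial^+B_1}y^a|\partial_\tau v|^2d\mathcal{H}^1\right)^{1/2}\left(\int_{\partial^+B_1}y^{-a}d_{\mathcal{N}}^2(v)\,d\mathcal{H}^1\right)^{1/2}.$$
   Context: $\partial^+B_1:=\{(x,y):x^2+y^2=1,\ y>0\}$ is the open upper unit half-circle, $\partial_\tau$ denotes the tangential derivative along it, and $H^1(\partial^+B_1;\mathbb{R}^d,y^ad\mathbf{x})$ is the space of maps $v$ on $\partial^+B_1$ with $\int_{\partial^+B_1}y^a(|v|^2+|\partial_\tau v|^2)d\mathcal{H}^1<\infty$; such maps are continuous up to the endpoints $(\pm1,0)$. $d_{\mathcal{N}}(z):=\inf_{p\in\mathcal{N}}|z-p|$ is the distance to $\mathcal{N}$. *)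

theory Defs
  imports "HOL-Analysis.Analysis"
begin

text \<open>f is C-infinity on the open set U: there is a family F of functions indexed by lists of
 directions with F [] = f on U, every F vs continuous on U, and F (w # vs) is the directional
 derivative of F vs in direction w at every point of U.  (Continuous directional derivatives of
 all orders is the usual C-infinity condition.)\<close>
definition smooth_on :: "'a::euclidean_space set \<Rightarrow> ('a \<Rightarrow> 'b::euclidean_space) \<Rightarrow> bool" where
  "smooth_on U f \<longleftrightarrow> open U \<and>
     (\<exists>F :: 'a list \<Rightarrow> 'a \<Rightarrow> 'b.
        (\<forall>x\<in>U. F [] x = f x) \<and>
        (\<forall>vs. continuous_on U (F vs)) \<and>
        (\<forall>vs w. \<forall>x\<in>U. ((\<lambda>t. F vs (x + t *\<^sub>R w)) has_vector_derivative F (w # vs) x) (at 0)))"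

definition smooth_submanifold :: "'a::euclidean_space set \<Rightarrow> bool" where
  "smooth_submanifold N \<longleftrightarrow>
     (\<forall>p\<in>N. \<exists>U V (\<phi>::'a \<Rightarrow> 'a) \<psi> L.
        open U \<and> p \<in> U \<and> open V \<and> subspace L \<and>
        smooth_on U \<phi> \<and> smooth_on V \<psi> \<and>
        (\<forall>x\<in>U. \<phi> x \<in> V \<and> \<psi> (\<phi> x) = x) \<and>
        (\<forall>z\<in>V. \<psi> z \<in> U \<and> \<phi> (\<psi> z) = z) \<and>
        \<phi> ` (U \<inter> N) = V \<inter> L)"

definition upper_half_circle :: "(real \<times> real) set" where
  "upper_half_circle = {(x, y). x\<^sup>2 + y\<^sup>2 = 1 \<and> y > 0}"

text \<open>Arc-length parametrisation of the upper half-circle by the angle in (0, pi);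
 H^1 measure on the arc corresponds to Lebesgue measure in the angle and the weight y is sin.\<close>
definition hc :: "real \<Rightarrow> real \<times> real" where
  "hc \<theta> = (cos \<theta>, sin \<theta>)"

text \<open>g is a (weak) tangential derivative of v along the half-circle: v(hc) is locally
 absolutely continuous on (0, pi) with derivative g.\<close>
definition tangential_weak_deriv :: "(real \<times> real \<Rightarrow> 'a::euclidean_space) \<Rightarrow> (real \<Rightarrow> 'a) \<Rightarrow> bool" where
  "tangential_weak_deriv v g \<longleftrightarrow>
     (\<forall>s t. 0 < s \<longrightarrow> s \<le> t \<longrightarrow> t < pi \<longrightarrow>
        set_integrable lborel {s..t} g \<and>
        v (hc t) - v (hc s) = (LINT \<theta>:{s..t}|lborel. g \<theta>))"

definition weighted_H1 :: "real \<Rightarrow> (real \<times> real \<Rightarrow> 'a::euclidean_space) \<Rightarrow> (real \<Rightarrow> 'a) \<Rightarrow> bool" where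
  "weighted_H1 a v g \<longleftrightarrow> tangential_weak_deriv v g \<and>
     set_integrable lborel {0<..<pi} (\<lambda>\<theta>. sin \<theta> powr a * (norm (v (hc \<theta>)))\<^sup>2) \<and>
     set_integrable lborel {0<..<pi} (\<lambda>\<theta>. sin \<theta> powr a * (norm (g \<theta>))\<^sup>2)"

end

theory Submission
  imports Defs
begin

(* Put w = v o hc on (0, pi) and h = d_N o w.  Since d_N is 1-Lipschitz, h varies no faster than
   |g|, so h^2 varies no faster than 2 h |g| <= l sin^a |g|^2 + sin^(-a) h^2 / l for every l > 0.
   The endpoint values of v lie in N, so h vanishes at both ends of (0, pi); integrating from
   both ends towards theta gives 2 h(theta)^2 <= l A + B / l, and optimising in l gives
   h(theta)^2 <= sqrt A * sqrt B.  As h need not be differentiable, the bound for h^2 is obtained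
   from the increments of h by a Bolzano (Cousin) covering argument. *)

lemma abs_power2_diff_le_integral_slack:
  fixes h f F :: "real \<Rightarrow> real"
  assumes "s \<le> t" and h: "continuous_on {s..t} h" "\<And>\<theta>. \<theta> \<in> {s..t} \<Longrightarrow> 0 \<le> h \<theta>"
    and f: "f integrable_on {s..t}" "\<And>\<theta>. \<theta> \<in> {s..t} \<Longrightarrow> 0 \<le> f \<theta>"
    and F: "F integrable_on {s..t}"
    and increment: "\<And>a b. s \<le> a \<Longrightarrow> a \<le> b \<Longrightarrow> b \<le> t \<Longrightarrow> \<bar>h b - h a\<bar> \<le> integral {a..b} f"
    and "0 < \<delta>"
    and hfF: "\<And>\<theta>. \<theta> \<in> {s..t} \<Longrightarrow> (2 * h \<theta> + \<delta>) * f \<theta> \<le> F \<theta>"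
  shows "\<bar>(h t)\<^sup>2 - (h s)\<^sup>2\<bar> \<le> integral {s..t} F"
proof -
  define P where "P a b \<longleftrightarrow> s \<le> a \<longrightarrow> b \<le> t \<longrightarrow> \<bar>(h b)\<^sup>2 - (h a)\<^sup>2\<bar> \<le> integral {a..b} F" for a b
  have "P s t"
    using \<open>s \<le> t\<close>
  proof (induct rule: Bolzano)
    case (trans a b c)
    then show ?case
      using Henstock_Kurzweil_Integration.integral_combine[of a b c F] integrable_on_subinterval[OF F, of a c]
      unfolding P_def by fastforce
  next
    case (local x)
    then obtain d where "d > 0" and d: "\<And>y. y \<in> {s..t} \<Longrightarrow> \<bar>y - x\<bar> < d \<Longrightarrow> \<bar>h y - h x\<bar> < \<delta>/4"
      using h(1) \<open>0 < \<delta>\<close> unfolding continuous_on_iff dist_real_def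
      by (metis atLeastAtMost_iff divide_pos_pos zero_less_numeral)
    (* On intervals this short, h a + h b exceeds 2 h by at most the slack \<delta>. *)
    have "P a b" if ab: "a \<le> x" "x \<le> b" "b - a < d" for a b
      unfolding P_def
    proof (intro impI)
      assume "s \<le> a" "b \<le> t"
      then have sub: "{a..b} \<subseteq> {s..t}" by auto
      have fab: "f integrable_on {a..b}" using integrable_on_subinterval[OF f(1) sub] .
      have close: "\<bar>h y - h x\<bar> < \<delta>/4" if "y \<in> {a..b}" for y
        using d[of y] that ab sub by auto
      have near: "h a + h b \<le> 2 * h \<theta> + \<delta>" if "\<theta> \<in> {a..b}" for \<theta>
      proof -
        have "\<bar>h a - h x\<bar> < \<delta>/4" "\<bar>h b - h x\<bar> < \<delta>/4" "\<bar>h \<theta> - h x\<bar> < \<delta>/4"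
          using close that ab by auto
        then show ?thesis by linarith
      qed
      have "\<bar>(h b)\<^sup>2 - (h a)\<^sup>2\<bar> = \<bar>h b - h a\<bar> * (h a + h b)"
        using h(2)[of a] h(2)[of b] sub ab
        by (simp add: power2_eq_square square_diff_square_factored abs_mult)
      also have "\<dots> \<le> integral {a..b} f * (h a + h b)"
        using increment[of a b] h(2)[of a] h(2)[of b] sub ab \<open>s \<le> a\<close> \<open>b \<le> t\<close>
        by (intro mult_right_mono) auto
      also have "\<dots> = integral {a..b} (\<lambda>\<theta>. (h a + h b) * f \<theta>)"
        by (simp add: mult.commute)
      also have "\<dots> \<le> integral {a..b} F"
      proof (rule integral_le)
        show "(\<lambda>\<theta>. (h a + h b) * f \<theta>) integrable_on {a..b}"
          using integrable_on_mult_right[OF fab] .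
        show "F integrable_on {a..b}" using integrable_on_subinterval[OF F sub] .
        show "(h a + h b) * f \<theta> \<le> F \<theta>" if "\<theta> \<in> {a..b}" for \<theta>
          using mult_right_mono[OF near[OF that] f(2)] hfF that sub by fastforce
      qed
      finally show "\<bar>(h b)\<^sup>2 - (h a)\<^sup>2\<bar> \<le> integral {a..b} F" .
    qed
    then show ?case using \<open>d > 0\<close> by blast
  qed
  then show ?thesis unfolding P_def by simp
qed

lemma abs_power2_diff_le_integral:
  fixes h f F :: "real \<Rightarrow> real"
  assumes "s \<le> t" and h: "continuous_on {s..t} h" "\<And>\<theta>. \<theta> \<in> {s..t} \<Longrightarrow> 0 \<le> h \<theta>"
    and f: "f integrable_on {s..t}" "\<And>\<theta>. \<theta> \<in> {s..t} \<Longrightarrow> 0 \<le> f \<theta>"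
    and F: "F integrable_on {s..t}"
    and increment: "\<And>a b. s \<le> a \<Longrightarrow> a \<le> b \<Longrightarrow> b \<le> t \<Longrightarrow> \<bar>h b - h a\<bar> \<le> integral {a..b} f"
    and hfF: "\<And>\<theta>. \<theta> \<in> {s..t} \<Longrightarrow> 2 * h \<theta> * f \<theta> \<le> F \<theta>"
  shows "\<bar>(h t)\<^sup>2 - (h s)\<^sup>2\<bar> \<le> integral {s..t} F"
proof (rule field_le_epsilon)
  fix e :: real assume "0 < e"
  define I where "I = integral {s..t} f"
  have "0 \<le> I" unfolding I_def using f by (rule integral_nonneg)
  define \<delta> where "\<delta> = e / (I + 1)"
  have "0 < \<delta>" using \<open>0 < e\<close> \<open>0 \<le> I\<close> by (simp add: \<delta>_def)
  have "\<delta> * I \<le> e"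
    using \<open>0 < e\<close> \<open>0 \<le> I\<close> by (simp add: \<delta>_def field_simps)
  have "\<bar>(h t)\<^sup>2 - (h s)\<^sup>2\<bar> \<le> integral {s..t} (\<lambda>\<theta>. F \<theta> + \<delta> * f \<theta>)"
  proof (rule abs_power2_diff_le_integral_slack[OF \<open>s \<le> t\<close> h f _ increment \<open>0 < \<delta>\<close>])
    show "(\<lambda>\<theta>. F \<theta> + \<delta> * f \<theta>) integrable_on {s..t}"
      using F integrable_on_mult_right[OF f(1)] by (rule integrable_add)
    show "(2 * h \<theta> + \<delta>) * f \<theta> \<le> F \<theta> + \<delta> * f \<theta>" if "\<theta> \<in> {s..t}" for \<theta>
      using hfF[OF that] by (simp add: distrib_right)
  qed
  also have "\<dots> = integral {s..t} F + \<delta> * I"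
    unfolding I_def using F f(1) by (simp add: integral_add integrable_on_mult_right)
  finally show "\<bar>(h t)\<^sup>2 - (h s)\<^sup>2\<bar> \<le> integral {s..t} F + e"
    using \<open>\<delta> * I \<le> e\<close> by linarith
qed

lemma power2_le_integral_if_tendsto_zero_at_ends:
  fixes h f F :: "real \<Rightarrow> real"
  assumes x: "c < x" "x < d"
    and h: "continuous_on {c<..<d} h" "\<And>\<theta>. \<theta> \<in> {c<..<d} \<Longrightarrow> 0 \<le> h \<theta>"
    and h_ends: "(h \<longlongrightarrow> 0) (at_right c)" "(h \<longlongrightarrow> 0) (at_left d)"
    and f: "\<And>a b. c < a \<Longrightarrow> a \<le> b \<Longrightarrow> b < d \<Longrightarrow> f integrable_on {a..b}" "\<And>\<theta>. \<theta> \<in> {c<..<d} \<Longrightarrow> 0 \<le> f \<theta>"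
    and F: "F integrable_on {c<..<d}" "\<And>\<theta>. \<theta> \<in> {c<..<d} \<Longrightarrow> 0 \<le> F \<theta>"
    and increment: "\<And>a b. c < a \<Longrightarrow> a \<le> b \<Longrightarrow> b < d \<Longrightarrow> \<bar>h b - h a\<bar> \<le> integral {a..b} f"
    and hfF: "\<And>\<theta>. \<theta> \<in> {c<..<d} \<Longrightarrow> 2 * h \<theta> * f \<theta> \<le> F \<theta>"
  shows "2 * (h x)\<^sup>2 \<le> integral {c<..<d} F"
proof (rule field_le_epsilon)
  fix e :: real assume "0 < e"
  have sq: "((\<lambda>\<theta>. (h \<theta>)\<^sup>2) \<longlongrightarrow> 0\<^sup>2) (at_right c)" "((\<lambda>\<theta>. (h \<theta>)\<^sup>2) \<longlongrightarrow> 0\<^sup>2) (at_left d)"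
    using h_ends by (auto intro: tendsto_power)
  have small: "\<forall>\<^sub>F \<theta> in at_right c. (h \<theta>)\<^sup>2 < e/2" "\<forall>\<^sub>F \<theta> in at_left d. (h \<theta>)\<^sup>2 < e/2"
    using order_tendstoD(2)[OF sq(1), of "e/2"] order_tendstoD(2)[OF sq(2), of "e/2"] \<open>0 < e\<close>
    by simp_all
  have "\<forall>\<^sub>F \<theta> in at_right c. (c < \<theta> \<and> \<theta> < x) \<and> (h \<theta>)\<^sup>2 < e/2"
    by (rule eventually_conj[OF eventually_at_rightI small(1)]) (use x in auto)
  then obtain s where s: "c < s" "s < x" "(h s)\<^sup>2 < e/2"
    using eventually_happens' trivial_limit_at_right_real by blast
  have "\<forall>\<^sub>F \<theta> in at_left d. (x < \<theta> \<and> \<theta> < d) \<and> (h \<theta>)\<^sup>2 < e/2"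
    by (rule eventually_conj[OF eventually_at_leftI small(2)]) (use x in auto)
  then obtain t where t: "x < t" "t < d" "(h t)\<^sup>2 < e/2"
    using eventually_happens' trivial_limit_at_left_real by blast
  have sub: "{s..t} \<subseteq> {c<..<d}"
    using s t by auto
  have on_subinterval: "\<bar>(h b)\<^sup>2 - (h a)\<^sup>2\<bar> \<le> integral {a..b} F" if "s \<le> a" "a \<le> b" "b \<le> t" for a b
  proof (rule abs_power2_diff_le_integral[OF \<open>a \<le> b\<close>])
    show "continuous_on {a..b} h" using that s t by (intro continuous_on_subset[OF h(1)]) auto
    show "f integrable_on {a..b}" using f(1) that s t by auto
    show "F integrable_on {a..b}" using that s t by (intro integrable_on_subinterval[OF F(1)]) auto
  qed (use that s t h(2) f(2) increment hfF in auto)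
  have "2 * (h x)\<^sup>2 \<le> integral {s..x} F + integral {x..t} F + (h s)\<^sup>2 + (h t)\<^sup>2"
    using on_subinterval[of s x] on_subinterval[of x t] s t by auto
  also have "integral {s..x} F + integral {x..t} F = integral {s..t} F"
    using Henstock_Kurzweil_Integration.integral_combine[of s x t F] integrable_on_subinterval[OF F(1) sub] s t
    by simp
  also have "integral {s..t} F \<le> integral {c<..<d} F"
    using sub F by (intro integral_subset_le integrable_on_subinterval[OF F(1)]) auto
  finally show "2 * (h x)\<^sup>2 \<le> integral {c<..<d} F + e"
    using s(3) t(3) by linarith
qed

lemma two_mult_le_weighted_sum:
  fixes S l h n a :: real
  assumes "0 < S" "0 < l"
  shows "2 * h * n \<le> l * (S powr a * n\<^sup>2) + (S powr (-a) * h\<^sup>2) / l"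
proof -
  define q where "q = l * S powr a"
  have "0 < q" using assms by (simp add: q_def)
  have "2 * h * n * q \<le> q\<^sup>2 * n\<^sup>2 + h\<^sup>2"
    using sum_power2_ge_zero[of "q * n - h" 0] by (simp add: power2_eq_square algebra_simps)
  moreover have "l * (S powr a * n\<^sup>2) + (S powr (-a) * h\<^sup>2) / l = (q\<^sup>2 * n\<^sup>2 + h\<^sup>2) / q"
    using assms by (simp add: q_def powr_minus field_simps power2_eq_square)
  ultimately show ?thesis
    using \<open>0 < q\<close> by (simp add: pos_le_divide_eq)
qed

lemma le_sqrt_mult_if_le_scaled_sum:
  fixes M A B :: real
  assumes "0 \<le> A" "0 \<le> B" and bound: "\<And>l. 0 < l \<Longrightarrow> 2 * M \<le> l * A + B / l"
  shows "M \<le> sqrt A * sqrt B"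
proof (cases "0 < A \<and> 0 < B")
  case True
  define l where "l = sqrt B / sqrt A"
  have "l * A = sqrt A * sqrt B" "B / l = sqrt A * sqrt B"
    using True by (simp_all add: l_def field_simps real_sqrt_mult flip: power2_eq_square)
  then show ?thesis using bound[of l] True by (simp add: l_def)
next
  case False
  have "M \<le> 0"
  proof (rule ccontr)
    assume "\<not> M \<le> 0"
    then have "0 < M" by simp
    consider "A = 0" | "B = 0" using False assms by linarith
    then show False
    proof cases
      case 1
      have "B / ((B + 1) / M) < M" using \<open>0 < M\<close> \<open>0 \<le> B\<close> by (simp add: field_simps)
      then show False using bound[of "(B + 1) / M"] 1 \<open>0 < M\<close> \<open>0 \<le> B\<close> by simp
    next
      case 2
      have "M / (A + 1) * A < M" using \<open>0 < M\<close> \<open>0 \<le> A\<close> by (simp add: field_simps)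
      then show False using bound[of "M / (A + 1)"] 2 \<open>0 < M\<close> \<open>0 \<le> A\<close> by simp
    qed
  qed
  then show ?thesis using assms(1,2) by (meson order.trans real_sqrt_ge_zero zero_le_mult_iff)
qed

lemma hc_image_upper_half_circle: "hc ` {0<..<pi} = upper_half_circle"
proof
  show "hc ` {0<..<pi} \<subseteq> upper_half_circle"
    by (auto simp: hc_def upper_half_circle_def sin_gt_zero)
  show "upper_half_circle \<subseteq> hc ` {0<..<pi}"
  proof
    fix z assume "z \<in> upper_half_circle"
    then obtain x y where z: "z = (x, y)" "x\<^sup>2 + y\<^sup>2 = 1" "0 < y"
      by (auto simp: upper_half_circle_def)
    then have "x\<^sup>2 < 1" by (smt (verit) zero_less_power)
    then have "\<bar>x\<bar> < 1" by (simp add: abs_square_less_1)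
    then have "arccos x \<in> {0<..<pi}" using arccos_lt_bounded by auto
    moreover have "hc (arccos x) = z"
      using z \<open>\<bar>x\<bar> < 1\<close> by (simp add: hc_def sin_arccos real_sqrt_unique)
    ultimately show "z \<in> hc ` {0<..<pi}" by blast
  qed
qed

lemma filterlim_hc_at_right_0: "filterlim hc (at (1, 0) within upper_half_circle) (at_right 0)"
  unfolding filterlim_at
proof
  show "\<forall>\<^sub>F \<theta> in at_right 0. hc \<theta> \<in> upper_half_circle \<and> hc \<theta> \<noteq> (1, 0)"
  proof (rule eventually_at_rightI[OF _ pi_gt_zero])
    fix \<theta> :: real assume "\<theta> \<in> {0<..<pi}"
    then show "hc \<theta> \<in> upper_half_circle \<and> hc \<theta> \<noteq> (1, 0)"
      using hc_image_upper_half_circle sin_gt_zero[of \<theta>] by (auto simp: hc_def)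
  qed
  have "(hc \<longlongrightarrow> hc 0) (at_right 0)"
    unfolding hc_def by (intro tendsto_intros continuous_imp_tendsto)
  then show "(hc \<longlongrightarrow> (1, 0)) (at_right 0)" by (simp add: hc_def)
qed

lemma filterlim_hc_at_left_pi: "filterlim hc (at (-1, 0) within upper_half_circle) (at_left pi)"
  unfolding filterlim_at
proof
  show "\<forall>\<^sub>F \<theta> in at_left pi. hc \<theta> \<in> upper_half_circle \<and> hc \<theta> \<noteq> (-1, 0)"
  proof (rule eventually_at_leftI[OF _ pi_gt_zero])
    fix \<theta> :: real assume "\<theta> \<in> {0<..<pi}"
    then show "hc \<theta> \<in> upper_half_circle \<and> hc \<theta> \<noteq> (-1, 0)"
      using hc_image_upper_half_circle sin_gt_zero[of \<theta>] by (auto simp: hc_def)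
  qed
  have "(hc \<longlongrightarrow> hc pi) (at_left pi)"
    unfolding hc_def by (intro tendsto_intros continuous_imp_tendsto)
  then show "(hc \<longlongrightarrow> (-1, 0)) (at_left pi)" by (simp add: hc_def)
qed

lemma tangential_weak_deriv_integral:
  assumes "tangential_weak_deriv v g" "0 < a" "a \<le> b" "b < pi"
  shows "g integrable_on {a..b}" "(\<lambda>\<theta>. norm (g \<theta>)) integrable_on {a..b}"
    and "v (hc b) - v (hc a) = integral {a..b} g"
proof -
  have g: "set_integrable lborel {a..b} g"
    and eq: "v (hc b) - v (hc a) = (LINT \<theta>:{a..b}|lborel. g \<theta>)"
    using assms unfolding tangential_weak_deriv_def by auto
  show "g integrable_on {a..b}" "v (hc b) - v (hc a) = integral {a..b} g"
    using set_borel_integral_eq_integral[OF g] eq by simp_all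
  show "(\<lambda>\<theta>. norm (g \<theta>)) integrable_on {a..b}"
    using set_borel_integral_eq_integral(1)[OF set_integrable_norm[OF g]] .
qed

lemma norm_diff_le_integral_tangential_weak_deriv:
  assumes "tangential_weak_deriv v g" "0 < a" "a \<le> b" "b < pi"
  shows "norm (v (hc b) - v (hc a)) \<le> integral {a..b} (\<lambda>\<theta>. norm (g \<theta>))"
  unfolding tangential_weak_deriv_integral(3)[OF assms]
  by (rule integral_norm_bound_integral) (use tangential_weak_deriv_integral[OF assms] in auto)

lemma continuous_on_tangential_weak_deriv:
  assumes "tangential_weak_deriv v g"
  shows "continuous_on {0<..<pi} (\<lambda>\<theta>. v (hc \<theta>))"
proof (rule continuous_at_imp_continuous_on, rule ballI)
  fix x :: real assume "x \<in> {0<..<pi}"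
  define a b where "a = x / 2" and "b = (x + pi) / 2"
  have ab: "0 < a" "a < x" "x < b" "b < pi"
    using \<open>x \<in> {0<..<pi}\<close> by (auto simp: a_def b_def)
  have "continuous_on {a..b} (\<lambda>\<theta>. v (hc a) + integral {a..\<theta>} g)"
    using tangential_weak_deriv_integral(1)[OF assms, of a b] ab
    by (intro continuous_intros indefinite_integral_continuous_1) auto
  moreover have "v (hc a) + integral {a..\<theta>} g = v (hc \<theta>)" if "\<theta> \<in> {a..b}" for \<theta>
  proof -
    have "v (hc \<theta>) - v (hc a) = integral {a..\<theta>} g"
      using tangential_weak_deriv_integral(3)[OF assms, of a \<theta>] that ab by simp
    then show ?thesis by (simp add: algebra_simps)
  qed
  ultimately have "continuous_on {a..b} (\<lambda>\<theta>. v (hc \<theta>))"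
    by (rule continuous_on_eq)
  moreover have "x \<in> interior {a..b}" using ab by simp
  ultimately show "isCont (\<lambda>\<theta>. v (hc \<theta>)) x"
    using continuous_on_interior by blast
qed

lemma weighted_H1_infdist_bound:
  fixes v :: "real \<times> real \<Rightarrow> 'a::euclidean_space"
  assumes "weighted_H1 a v g"
    and "p \<in> N" "(v \<longlongrightarrow> p) (at (1, 0) within upper_half_circle)"
    and "q \<in> N" "(v \<longlongrightarrow> q) (at (-1, 0) within upper_half_circle)"
    and H_integrable: "set_integrable lborel {0<..<pi} (\<lambda>\<theta>. sin \<theta> powr (-a) * (infdist (v (hc \<theta>)) N)\<^sup>2)"
    and "x \<in> {0<..<pi}" "0 < l"
  shows "2 * (infdist (v (hc x)) N)\<^sup>2 \<le>
    l * (LINT \<theta>:{0<..<pi}|lborel. sin \<theta> powr a * (norm (g \<theta>))\<^sup>2) +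
    (LINT \<theta>:{0<..<pi}|lborel. sin \<theta> powr (-a) * (infdist (v (hc \<theta>)) N)\<^sup>2) / l"
proof -
  define h where "h = (\<lambda>\<theta>. infdist (v (hc \<theta>)) N)"
  define G where "G = (\<lambda>\<theta>. sin \<theta> powr a * (norm (g \<theta>))\<^sup>2)"
  define H where "H = (\<lambda>\<theta>. sin \<theta> powr (-a) * (h \<theta>)\<^sup>2)"
  have tw: "tangential_weak_deriv v g" and G_integrable: "set_integrable lborel {0<..<pi} G"
    using assms(1) unfolding weighted_H1_def G_def by auto
  note G = set_borel_integral_eq_integral[OF G_integrable]
  have "set_integrable lborel {0<..<pi} H"
    using H_integrable by (simp add: H_def h_def)
  note H = set_borel_integral_eq_integral[OF this]
  have "2 * (h x)\<^sup>2 \<le> integral {0<..<pi} (\<lambda>\<theta>. l * G \<theta> + H \<theta> / l)"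
  proof (rule power2_le_integral_if_tendsto_zero_at_ends[where h = h and f = "\<lambda>\<theta>. norm (g \<theta>)"])
    show "continuous_on {0<..<pi} h"
      unfolding h_def by (intro continuous_on_infdist continuous_on_tangential_weak_deriv[OF tw])
    show "(h \<longlongrightarrow> 0) (at_right 0)"
      using tendsto_infdist[OF filterlim_compose[OF assms(3) filterlim_hc_at_right_0], of N] \<open>p \<in> N\<close>
      by (simp add: h_def o_def)
    show "(h \<longlongrightarrow> 0) (at_left pi)"
      using tendsto_infdist[OF filterlim_compose[OF assms(5) filterlim_hc_at_left_pi], of N] \<open>q \<in> N\<close>
      by (simp add: h_def o_def)
    show "(\<lambda>\<theta>. l * G \<theta> + H \<theta> / l) integrable_on {0<..<pi}"
      using G(1) H(1) by (intro integrable_add integrable_on_mult_right integrable_on_divide)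
    show "\<bar>h b - h a\<bar> \<le> integral {a..b} (\<lambda>\<theta>. norm (g \<theta>))" if "0 < a" "a \<le> b" "b < pi" for a b
      using infdist_triangle_abs[of "v (hc b)" N "v (hc a)"]
        norm_diff_le_integral_tangential_weak_deriv[OF tw that]
      by (simp add: h_def dist_norm)
    show "2 * h \<theta> * norm (g \<theta>) \<le> l * G \<theta> + H \<theta> / l" if "\<theta> \<in> {0<..<pi}" for \<theta>
      using two_mult_le_weighted_sum[OF sin_gt_zero \<open>0 < l\<close>, of \<theta> "h \<theta>" "norm (g \<theta>)" a] that
      by (simp add: G_def H_def)
  qed (use assms(7,8) tangential_weak_deriv_integral(2)[OF tw] in \<open>auto simp: h_def G_def H_def infdist_nonneg\<close>)
  also have "\<dots> = l * integral {0<..<pi} G + integral {0<..<pi} H / l"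
    using G(1) H(1) by (simp add: integral_add integrable_on_mult_right integrable_on_divide)
  finally show ?thesis
    using G(2) H(2) by (simp add: h_def G_def H_def)
qed

theorem lemma3p1:
  fixes s a :: real and N :: "'a::euclidean_space set"
    and v :: "real \<times> real \<Rightarrow> 'a" and g :: "real \<Rightarrow> 'a"
  assumes "0 < s" and "s < 1/2" and "a = 1 - 2 * s"
    and "compact N" "smooth_submanifold N"
    and "weighted_H1 a v g"
    and "\<exists>p\<in>N. (v \<longlongrightarrow> p) (at (1, 0) within upper_half_circle)"
    and "\<exists>q\<in>N. (v \<longlongrightarrow> q) (at (-1, 0) within upper_half_circle)"
  shows "\<forall>x\<in>upper_half_circle.
           set_integrable lborel {0<..<pi} (\<lambda>\<theta>. sin \<theta> powr (-a) * (infdist (v (hc \<theta>)) N)\<^sup>2) \<longrightarrow>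
           (infdist (v x) N)\<^sup>2 \<le>
             sqrt (LINT \<theta>:{0<..<pi}|lborel. sin \<theta> powr a * (norm (g \<theta>))\<^sup>2) *
             sqrt (LINT \<theta>:{0<..<pi}|lborel. sin \<theta> powr (-a) * (infdist (v (hc \<theta>)) N)\<^sup>2)"
  (* Only N containing the endpoint values of v is used. *)
proof (intro ballI impI)
  fix z assume "z \<in> upper_half_circle"
    and H: "set_integrable lborel {0<..<pi} (\<lambda>\<theta>. sin \<theta> powr (-a) * (infdist (v (hc \<theta>)) N)\<^sup>2)"
  then obtain x where x: "x \<in> {0<..<pi}" "z = hc x"
    using hc_image_upper_half_circle by blast
  obtain p q where ends: "p \<in> N" "(v \<longlongrightarrow> p) (at (1, 0) within upper_half_circle)"
    "q \<in> N" "(v \<longlongrightarrow> q) (at (-1, 0) within upper_half_circle)"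
    using assms(7,8) by blast
  show "(infdist (v z) N)\<^sup>2 \<le>
      sqrt (LINT \<theta>:{0<..<pi}|lborel. sin \<theta> powr a * (norm (g \<theta>))\<^sup>2) *
      sqrt (LINT \<theta>:{0<..<pi}|lborel. sin \<theta> powr (-a) * (infdist (v (hc \<theta>)) N)\<^sup>2)"
    unfolding x(2)
    by (rule le_sqrt_mult_if_le_scaled_sum[OF _ _ weighted_H1_infdist_bound[OF assms(6) ends H x(1)]])
      (auto intro!: integral_nonneg simp: set_lebesgue_integral_def)
qed

end
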